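(* For every base $\mathcal{B}$, atomic multiset $L$, nonempty finite multiset $\Gamma$ of ILL formulae and ILL formula $\varphi$: $\Gamma\Vdash^L_{\mathcal{B}}\varphi$ if and only if for every base $\mathcal{C}\supseteq\mathcal{B}$ and every atomic multiset $K$, $\Vdash^K_{\mathcal{C}}\Gamma$ implies $\Vdash^{L,K}_{\mathcal{C}}\varphi$.
   Context: Fix a set $\mathbb{A}$ of propositional atoms. ILL formulae: $\phi ::= p\in\mathbb{A} \mid \top \mid 0 \mid 1 \mid \phi\multimap\phi \mid \phi\otimes\phi \mid \phi\,\&\,\phi \mid \phi\oplus\phi \mid\ !\phi$. All multisets are finite; "$\Gamma,\Delta$" denotes multiset union. Atomic rules and bases: an atomic sequent is $P\Rightarrow p$ with $P$ a multiset of atoms, $p$ an atom. An atomic box is a multiset of atomic sequents. An atomic rule is a triple $\langle\mathbf{A},\mathbf{S},p\rangle$ with $\mathbf{A}$ a multiset of atomic boxes, $\mathbf{S}$ an atomic box, $p$ an atom. A base is a set of atomic rules. An atom $p$ is persistent in $\mathcal{B}$ if some $\langle\varnothing,\mathbf{S},p\rangle\in\mathcal{B}$ has $\mathbf{S}\neq\varnothing$. Derivability $\vdash_{\mathcal{B}}$: (Ref) $p\vdash_{\mathcal{B}}p$; (App) if $\langle\mathbf{A},\mathbf{S},p\rangle\in\mathcal{B}$ with $\mathbf{A}=\{\mathbf{T}_1,\dots,\mathbf{T}_m\}$, and there are atomic multisets $C_1,\dots,C_n$ ($n\ge m$) and a multiset $D=\{d_{m+1},\dots,d_n\}$ of atoms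 persistent in $\mathcal{B}$ such that $C_i,Q\vdash_{\mathcal{B}}q$ for every $i\le m$ and every $Q\Rightarrow q\in\mathbf{T}_i$, $C_j\vdash_{\mathcal{B}}d_j$ for every $m<j\le n$, and $D,U\vdash_{\mathcal{B}}v$ for every $U\Rightarrow v\in\mathbf{S}$, then $C_1,\dots,C_n\vdash_{\mathcal{B}}p$. Support $\Vdash^L_{\mathcal{B}}$ (base $\mathcal{B}$, atomic multiset $L$), by induction on formulae: $\Vdash^L_{\mathcal{B}}p$ iff $L\vdash_{\mathcal{B}}p$; $\Vdash^L_{\mathcal{B}}\varphi\multimap\psi$ iff $\varphi\Vdash^L_{\mathcal{B}}\psi$; $\Vdash^L_{\mathcal{B}}\varphi\otimes\psi$ iff for all $\mathcal{C}\supseteq\mathcal{B}$, atomic $K$, atoms $p$: if $\varphi,\psi\Vdash^K_{\mathcal{C}}p$ then $\Vdash^{L,K}_{\mathcal{C}}p$; $\Vdash^L_{\mathcal{B}}1$ iff for all $\mathcal{C}\supseteq\mathcal{B}$, $K$, $p$: if $\Vdash^K_{\mathcal{C}}p$ then $\Vdash^{L,K}_{\mathcal{C}}p$; $\Vdash^L_{\mathcal{B}}\varphi\&\psi$ iff $\Vdash^L_{\mathcal{B}}\varphi$ and $\Vdash^L_{\mathcal{B}}\psi$; $\Vdash^L_{\mathcal{B}}\varphi\oplus\psi$ iff for all $\mathcal{C}\supseteq\mathcal{B}$, $K$, $p$: if $\varphi\Vdash^K_{\mathcal{C}}p$ and $\psi\Vdash^K_{\mathcal{C}}p$ then $\Vdash^{L,K}_{\mathcal{C}}p$;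 $\Vdash^L_{\mathcal{B}}0$ iff $\Vdash^{L,K}_{\mathcal{B}}p$ for all atoms $p$ and atomic $K$; $\Vdash^L_{\mathcal{B}}\top$ always; $\Vdash^L_{\mathcal{B}}!\varphi$ iff for all $\mathcal{C}\supseteq\mathcal{B}$, $K$, $p$: if (for all $\mathcal{D}\supseteq\mathcal{C}$, $\Vdash^{\varnothing}_{\mathcal{D}}\varphi$ implies $\Vdash^K_{\mathcal{D}}p$) then $\Vdash^{L,K}_{\mathcal{C}}p$. For nonempty multisets: $\Vdash^L_{\mathcal{B}}\Gamma,\Delta$ iff $L=K,M$ with $\Vdash^K_{\mathcal{B}}\Gamma$ and $\Vdash^M_{\mathcal{B}}\Delta$. For a nonempty antecedent written $!\Delta,\Theta$, where $!\Delta$ collects the formulae with top-level connective $!$ (with $\Delta$ the formulae under those $!$) and $\Theta$ contains none: $!\Delta,\Theta\Vdash^L_{\mathcal{B}}\varphi$ iff for all $\mathcal{C}\supseteq\mathcal{B}$ and atomic $K$, if $\Vdash^{\varnothing}_{\mathcal{C}}\delta$ for every $\delta\in\Delta$ and $\Vdash^K_{\mathcal{C}}\Theta$ then $\Vdash^{L,K}_{\mathcal{C}}\varphi$ (when $\Theta$ is empty, $K$ is empty). An empty antecedent: $\varnothing\Vdash^L_{\mathcal{B}}\varphi$ means $\Vdash^L_{\mathcal{B}}\varphi$. *)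

theory Defs
  imports Main "HOL-Library.Multiset"
begin

datatype 'a form =
    Atom 'a
  | Top
  | Zero
  | One
  | Imp "'a form" "'a form"
  | Tensor "'a form" "'a form"
  | With "'a form" "'a form"
  | Plus "'a form" "'a form"
  | Bang "'a form"

type_synonym 'a aseq = "'a multiset \<times> 'a"
type_synonym 'a abox = "'a aseq multiset"
type_synonym 'a arule = "'a abox multiset \<times> 'a abox \<times> 'a"
type_synonym 'a base = "'a arule set"

definition persistent :: "'a base \<Rightarrow> 'a \<Rightarrow> bool" where
  "persistent B p \<longleftrightarrow> (\<exists>S. ({#}, S, p) \<in> B \<and> S \<noteq> {#})"

text \<open>Derivability in a base. In rule App, the list Ts enumerates the boxes
  T_1..T_m of A, Cs = [C_1..C_m], and Es = [(C_{m+1},d_{m+1}),..,(C_n,d_n)].\<close>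

inductive deriv :: "'a base \<Rightarrow> 'a multiset \<Rightarrow> 'a \<Rightarrow> bool" for B where
  Ref: "deriv B {#p#} p"
| App: "\<lbrakk> (A, S, p) \<in> B; mset Ts = A; length Cs = length Ts;
          \<forall>i<length Ts. \<forall>Q q. (Q, q) \<in># Ts ! i \<longrightarrow> deriv B (Cs ! i + Q) q;
          \<forall>j<length Es. deriv B (fst (Es ! j)) (snd (Es ! j)) \<and> persistent B (snd (Es ! j));
          \<forall>U v. (U, v) \<in># S \<longrightarrow> deriv B (mset (map snd Es) + U) v \<rbrakk>
        \<Longrightarrow> deriv B (sum_list Cs + sum_list (map fst Es)) p"

abbreviation ante_part ::
  "('a base \<Rightarrow> 'a multiset \<Rightarrow> 'a form \<Rightarrow> bool) \<Rightarrow> 'a base \<Rightarrow> 'a multiset \<Rightarrow> 'a form \<Rightarrow> bool" where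
  "ante_part S C K \<phi> \<equiv> (case \<phi> of Bang \<delta> \<Rightarrow> K = {#} \<and> S C {#} \<delta> | _ \<Rightarrow> S C K \<phi>)"

fun supp :: "'a base \<Rightarrow> 'a multiset \<Rightarrow> 'a form \<Rightarrow> bool" where
  "supp B L (Atom p) = deriv B L p"
| "supp B L (Imp \<phi> \<psi>) =
     (\<forall>C K. B \<subseteq> C \<longrightarrow> ante_part supp C K \<phi> \<longrightarrow> supp C (L + K) \<psi>)"
| "supp B L (Tensor \<phi> \<psi>) =
     (\<forall>C K p. B \<subseteq> C \<longrightarrow>
        (\<forall>C' K'. C \<subseteq> C' \<longrightarrow>
            (\<exists>K1 K2. K' = K1 + K2 \<and> ante_part supp C' K1 \<phi> \<and> ante_part supp C' K2 \<psi>) \<longrightarrow>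
            deriv C' (K + K') p) \<longrightarrow>
        deriv C (L + K) p)"
| "supp B L One = (\<forall>C K p. B \<subseteq> C \<longrightarrow> deriv C K p \<longrightarrow> deriv C (L + K) p)"
| "supp B L (With \<phi> \<psi>) = (supp B L \<phi> \<and> supp B L \<psi>)"
| "supp B L (Plus \<phi> \<psi>) =
     (\<forall>C K p. B \<subseteq> C \<longrightarrow>
        (\<forall>C' K'. C \<subseteq> C' \<longrightarrow> ante_part supp C' K' \<phi> \<longrightarrow> deriv C' (K + K') p) \<longrightarrow>
        (\<forall>C' K'. C \<subseteq> C' \<longrightarrow> ante_part supp C' K' \<psi> \<longrightarrow> deriv C' (K + K') p) \<longrightarrow>
        deriv C (L + K) p)"
| "supp B L Zero = (\<forall>p K. deriv B (L + K) p)"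
| "supp B L Top = True"
| "supp B L (Bang \<phi>) =
     (\<forall>C K p. B \<subseteq> C \<longrightarrow> (\<forall>D. C \<subseteq> D \<longrightarrow> supp D {#} \<phi> \<longrightarrow> deriv D K p) \<longrightarrow>
        deriv C (L + K) p)"

text \<open>Support of a multiset of formulae: L splits as a sum of pieces, one per formula.
  (For the empty multiset this forces L to be empty.)\<close>

definition supp_ms :: "'a base \<Rightarrow> 'a multiset \<Rightarrow> 'a form multiset \<Rightarrow> bool" where
  "supp_ms B L \<Gamma> \<longleftrightarrow> (\<exists>fs Ls. mset fs = \<Gamma> \<and> length Ls = length fs \<and> L = sum_list Ls \<and>
                          (\<forall>i<length fs. supp B (Ls ! i) (fs ! i)))"

definition is_bang :: "'a form \<Rightarrow> bool" where
  "is_bang \<phi> \<longleftrightarrow> (\<exists>\<delta>. \<phi> = Bang \<delta>)"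

text \<open>Support with an antecedent Gamma = !Delta, Theta.\<close>

definition ante_supp :: "'a base \<Rightarrow> 'a multiset \<Rightarrow> 'a form multiset \<Rightarrow> 'a form \<Rightarrow> bool" where
  "ante_supp B L \<Gamma> \<phi> \<longleftrightarrow>
     (if \<Gamma> = {#} then supp B L \<phi>
      else (\<forall>C K. B \<subseteq> C \<longrightarrow>
              (\<forall>\<delta>. Bang \<delta> \<in># \<Gamma> \<longrightarrow> supp C {#} \<delta>) \<longrightarrow>
              (if filter_mset (\<lambda>\<psi>. \<not> is_bang \<psi>) \<Gamma> = {#} then K = {#}
               else supp_ms C K (filter_mset (\<lambda>\<psi>. \<not> is_bang \<psi>) \<Gamma>)) \<longrightarrow>
              supp C (L + K) \<phi>))"

end

theory Submission
  imports Defs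
begin

text \<open>The key fact is a generalised \<open>!\<close>-elimination: if \<open>!\<delta>\<close> is supported with
  atoms \<open>K\<close>, and \<open>\<psi>\<close> is supported with atoms \<open>M\<close> in every extension of the base that
  supports \<open>\<delta>\<close> outright, then \<open>\<psi>\<close> is supported with \<open>K + M\<close>. For atomic \<open>\<psi>\<close> this
  is the clause defining \<open>!\<close>, and it lifts to every \<open>\<psi>\<close> by induction, since each
  elimination-style clause of support quantifies over an upward closed family of extensions.
  It lets the atoms supporting the banged part of \<open>\<Gamma>\<close> be discharged, so the reading
  \<open>!\<Delta>, \<Theta>\<close> of the antecedent agrees with plain support of \<open>\<Gamma>\<close>; conversely, outright
  support of \<open>\<delta>\<close> gives support of \<open>!\<delta>\<close> with no atoms.\<close>

lemma deriv_mono: "deriv B L p \<Longrightarrow> B \<subseteq> C \<Longrightarrow> deriv C L p"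
proof (induction rule: deriv.induct)
  case (Ref p)
  show ?case by (rule deriv.Ref)
next
  case (App A S p Ts Cs Es)
  have "persistent C q" if "persistent B q" for q
    using that App.prems unfolding persistent_def by blast
  with App show ?case
    by (intro deriv.App[of A S p C Ts Cs Es]) auto
qed

lemma supp_mono: "supp B L \<phi> \<Longrightarrow> B \<subseteq> C \<Longrightarrow> supp C L \<phi>"
proof (induction \<phi> arbitrary: B C L)
  case Atom
  then show ?case by (auto intro: deriv_mono)
next
  case Zero
  then show ?case by (auto intro: deriv_mono)
qed (simp; blast)+

lemma ante_part_mono: "ante_part supp B L \<phi> \<Longrightarrow> B \<subseteq> C \<Longrightarrow> ante_part supp C L \<phi>"
  by (cases \<phi>) (auto intro: supp_mono deriv_mono)

lemma supp_ms_mono: "supp_ms B L \<Gamma> \<Longrightarrow> B \<subseteq> C \<Longrightarrow> supp_ms C L \<Gamma>"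
  unfolding supp_ms_def using supp_mono by blast

lemma supp_Bang_intro: "supp C {#} \<delta> \<Longrightarrow> supp C {#} (Bang \<delta>)"
  by (auto intro: supp_mono)

lemma all_extensions_mono:
  "\<forall>D. C \<subseteq> D \<longrightarrow> P D \<Longrightarrow> C \<subseteq> C' \<Longrightarrow> \<forall>D. C' \<subseteq> D \<longrightarrow> P D"
  by (meson subset_trans)

lemma all_extensions_mono2:
  "\<forall>D x. C \<subseteq> D \<longrightarrow> P D x \<Longrightarrow> C \<subseteq> C' \<Longrightarrow> \<forall>D x. C' \<subseteq> D \<longrightarrow> P D x"
  by (meson subset_trans)

lemma supp_Plus_iff_conj:
  "supp C L (Plus \<phi> \<psi>) \<longleftrightarrow>
     (\<forall>C' N p. C \<subseteq> C' \<longrightarrow>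
        (\<forall>C'' K'. C' \<subseteq> C'' \<longrightarrow> ante_part supp C'' K' \<phi> \<longrightarrow> deriv C'' (N + K') p) \<and>
        (\<forall>C'' K'. C' \<subseteq> C'' \<longrightarrow> ante_part supp C'' K' \<psi> \<longrightarrow> deriv C'' (N + K') p) \<longrightarrow>
        deriv C' (L + N) p)"
  by (simp only: supp.simps imp_conjL)

text \<open>The support clauses of \<open>One\<close>, \<open>Tensor\<close>, \<open>Plus\<close> and \<open>Bang\<close> all have the shape of
  the conclusion, each with its own upward closed \<open>Q\<close>.\<close>

lemma supp_Bang_elim_upward_closed:
  assumes bang: "supp C K (Bang \<delta>)"
    and elim: "\<forall>D. C \<subseteq> D \<longrightarrow> supp D {#} \<delta> \<longrightarrow>
                 (\<forall>C' N p. D \<subseteq> C' \<longrightarrow> Q C' N p \<longrightarrow> deriv C' (M + N) p)"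
    and up: "\<And>C' C'' N p. Q C' N p \<Longrightarrow> C' \<subseteq> C'' \<Longrightarrow> Q C'' N p"
  shows "\<forall>C' N p. C \<subseteq> C' \<longrightarrow> Q C' N p \<longrightarrow> deriv C' (K + M + N) p"
proof (intro allI impI)
  fix C' N p
  assume "C \<subseteq> C'" and "Q C' N p"
  have "deriv D (M + N) p" if "C' \<subseteq> D" and "supp D {#} \<delta>" for D
    using elim up[OF \<open>Q C' N p\<close> \<open>C' \<subseteq> D\<close>] \<open>C \<subseteq> C'\<close> that by blast
  with bang \<open>C \<subseteq> C'\<close> have "deriv C' (K + (M + N)) p"
    by simp
  then show "deriv C' (K + M + N) p"
    by (simp add: add.assoc)
qed

lemma supp_Bang_elim_Imp:
  assumes elim: "\<And>C K M. supp C K (Bang \<delta>) \<Longrightarrow>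
                   \<forall>D. C \<subseteq> D \<longrightarrow> supp D {#} \<delta> \<longrightarrow> supp D M \<psi> \<Longrightarrow> supp C (K + M) \<psi>"
    and bang: "supp C K (Bang \<delta>)"
    and imp: "\<forall>D. C \<subseteq> D \<longrightarrow> supp D {#} \<delta> \<longrightarrow> supp D M (Imp \<phi> \<psi>)"
  shows "supp C (K + M) (Imp \<phi> \<psi>)"
proof (simp, intro allI impI)
  fix C' N
  assume "C \<subseteq> C'" and \<phi>: "ante_part supp C' N \<phi>"
  have "supp D (M + N) \<psi>" if "C' \<subseteq> D" "supp D {#} \<delta>" for D
  proof -
    have "supp D M (Imp \<phi> \<psi>)"
      using imp \<open>C \<subseteq> C'\<close> that by auto
    moreover have "ante_part supp D N \<phi>"
      using ante_part_mono[OF \<phi> \<open>C' \<subseteq> D\<close>] .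
    ultimately show ?thesis
      by auto
  qed
  with elim bang \<open>C \<subseteq> C'\<close> have "supp C' (K + (M + N)) \<psi>"
    by (meson supp_mono)
  then show "supp C' (K + M + N) \<psi>"
    by (simp add: add.assoc)
qed

lemma supp_Bang_elim:
  assumes "supp C K (Bang \<delta>)"
    and "\<forall>D. C \<subseteq> D \<longrightarrow> supp D {#} \<delta> \<longrightarrow> supp D M \<psi>"
  shows "supp C (K + M) \<psi>"
  using assms
proof (induction \<psi> arbitrary: C K M)
  case Atom
  then show ?case by simp
next
  case Zero
  show ?case
  proof (simp, intro allI)
    fix p N
    have "deriv C (K + (M + N)) p"
      using Zero.prems by auto
    then show "deriv C (K + M + N) p"
      by (simp add: add.assoc)
  qed
next
  case (Imp \<phi> \<psi>)
  show ?case
    by (rule supp_Bang_elim_Imp[OF Imp.IH(2) Imp.prems])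
next
  case One
  then show ?case
    unfolding supp.simps(4) by (rule supp_Bang_elim_upward_closed) (rule deriv_mono)
next
  case Tensor
  from Tensor.prems show ?case
    unfolding supp.simps(3)
    by (rule supp_Bang_elim_upward_closed) (erule (1) all_extensions_mono2)
next
  case Plus
  from Plus.prems show ?case
    unfolding supp_Plus_iff_conj
    by (rule supp_Bang_elim_upward_closed)
      (elim conjE, intro conjI; erule (1) all_extensions_mono2)
next
  case (Bang \<phi>)
  from Bang.prems show ?case
    unfolding supp.simps(9)[of _ _ \<phi>]
    by (rule supp_Bang_elim_upward_closed) (erule (1) all_extensions_mono)
next
  case Top
  show ?case by simp
next
  case With
  then show ?case by simp
qed

lemma supp_ms_iff_pairs:
  "supp_ms B L \<Gamma> \<longleftrightarrow>
     (\<exists>X. image_mset fst X = \<Gamma> \<and> L = sum_mset (image_mset snd X) \<and>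
          (\<forall>x\<in>#X. supp B (snd x) (fst x)))"
proof
  assume "supp_ms B L \<Gamma>"
  then obtain fs Ls where "mset fs = \<Gamma>" "length Ls = length fs" "L = sum_list Ls"
      "\<forall>i<length fs. supp B (Ls ! i) (fs ! i)"
    unfolding supp_ms_def by blast
  then show "\<exists>X. image_mset fst X = \<Gamma> \<and> L = sum_mset (image_mset snd X) \<and>
               (\<forall>x\<in>#X. supp B (snd x) (fst x))"
    by (intro exI[of _ "mset (zip fs Ls)"])
       (auto simp flip: mset_map simp: sum_mset_sum_list set_zip)
next
  assume "\<exists>X. image_mset fst X = \<Gamma> \<and> L = sum_mset (image_mset snd X) \<and>
               (\<forall>x\<in>#X. supp B (snd x) (fst x))"
  then obtain xs where "mset (map fst xs) = \<Gamma>" "L = sum_list (map snd xs)"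
      "\<forall>x\<in>set xs. supp B (snd x) (fst x)"
    by (metis ex_mset mset_map set_mset_mset sum_mset_sum_list)
  then show "supp_ms B L \<Gamma>"
    unfolding supp_ms_def by (intro exI[of _ "map fst xs"] exI[of _ "map snd xs"]) auto
qed

lemma supp_ms_empty [simp]: "supp_ms B L {#} \<longleftrightarrow> L = {#}"
  by (auto simp: supp_ms_iff_pairs)

lemma supp_ms_add_mset:
  "supp_ms B L (add_mset \<phi> \<Gamma>) \<longleftrightarrow> (\<exists>L1 L2. L = L1 + L2 \<and> supp B L1 \<phi> \<and> supp_ms B L2 \<Gamma>)"
proof
  assume "supp_ms B L (add_mset \<phi> \<Gamma>)"
  then obtain X where X: "image_mset fst X = add_mset \<phi> \<Gamma>" "L = sum_mset (image_mset snd X)"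
      "\<forall>x\<in>#X. supp B (snd x) (fst x)"
    unfolding supp_ms_iff_pairs by blast
  then obtain x X' where X': "X = add_mset x X'" "fst x = \<phi>" "image_mset fst X' = \<Gamma>"
    using msed_map_invR by metis
  have "supp_ms B (sum_mset (image_mset snd X')) \<Gamma>"
    unfolding supp_ms_iff_pairs using X(3) X'(1,3) by auto
  moreover have "supp B (snd x) \<phi>"
    using X(3) X'(1,2) by auto
  moreover have "L = snd x + sum_mset (image_mset snd X')"
    using X(2) X'(1) by simp
  ultimately show "\<exists>L1 L2. L = L1 + L2 \<and> supp B L1 \<phi> \<and> supp_ms B L2 \<Gamma>"
    by blast
next
  assume "\<exists>L1 L2. L = L1 + L2 \<and> supp B L1 \<phi> \<and> supp_ms B L2 \<Gamma>"
  then obtain L1 L2 X where "L = L1 + L2" "supp B L1 \<phi>" "image_mset fst X = \<Gamma>"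
      "L2 = sum_mset (image_mset snd X)" "\<forall>x\<in>#X. supp B (snd x) (fst x)"
    unfolding supp_ms_iff_pairs by blast
  then show "supp_ms B L (add_mset \<phi> \<Gamma>)"
    unfolding supp_ms_iff_pairs by (intro exI[of _ "add_mset (\<phi>, L1) X"]) auto
qed

lemma supp_ms_union:
  "supp_ms B L (\<Gamma> + \<Delta>) \<longleftrightarrow> (\<exists>L1 L2. L = L1 + L2 \<and> supp_ms B L1 \<Gamma> \<and> supp_ms B L2 \<Delta>)"
proof (induction \<Gamma> arbitrary: L)
  case empty
  then show ?case by simp
next
  case (add \<phi> \<Gamma>)
  have "supp_ms B L (add_mset \<phi> \<Gamma> + \<Delta>) \<longleftrightarrow>
      (\<exists>L1 L2 L3. L = L1 + L2 + L3 \<and> supp B L1 \<phi> \<and> supp_ms B L2 \<Gamma> \<and> supp_ms B L3 \<Delta>)"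
    by (auto simp: supp_ms_add_mset add.IH add.assoc)
  also have "\<dots> \<longleftrightarrow> (\<exists>L1 L2. L = L1 + L2 \<and> supp_ms B L1 (add_mset \<phi> \<Gamma>) \<and> supp_ms B L2 \<Delta>)"
    by (auto simp: supp_ms_add_mset)
  finally show ?case .
qed

lemma supp_ms_partition:
  "supp_ms B L \<Gamma> \<longleftrightarrow>
     (\<exists>L1 L2. L = L1 + L2 \<and> supp_ms B L1 (filter_mset P \<Gamma>) \<and>
              supp_ms B L2 (filter_mset (\<lambda>\<psi>. \<not> P \<psi>) \<Gamma>))"
  by (subst multiset_partition[of \<Gamma> P]) (rule supp_ms_union)

lemma is_bang_Bang [simp]: "is_bang (Bang \<delta>)"
  by (simp add: is_bang_def)

lemma supp_ms_Bangs_elim: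
  assumes "supp_ms C K \<Gamma>" and "\<forall>\<phi>\<in>#\<Gamma>. is_bang \<phi>"
    and "\<forall>D. C \<subseteq> D \<longrightarrow> (\<forall>\<delta>. Bang \<delta> \<in># \<Gamma> \<longrightarrow> supp D {#} \<delta>) \<longrightarrow> supp D M \<psi>"
  shows "supp C (K + M) \<psi>"
  using assms
proof (induction \<Gamma> arbitrary: C K)
  case empty
  then show ?case by auto
next
  case (add \<phi> \<Gamma>)
  obtain \<delta> where \<phi>: "\<phi> = Bang \<delta>"
    using add.prems(2) by (auto simp: is_bang_def)
  obtain K1 K2 where K: "K = K1 + K2" "supp C K1 (Bang \<delta>)" "supp_ms C K2 \<Gamma>"
    using add.prems(1) \<phi> by (auto simp: supp_ms_add_mset)
  have "supp D (K2 + M) \<psi>" if "C \<subseteq> D" "supp D {#} \<delta>" for D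
  proof (rule add.IH)
    show "supp_ms D K2 \<Gamma>"
      using K(3) \<open>C \<subseteq> D\<close> by (rule supp_ms_mono)
    show "\<forall>\<phi>\<in>#\<Gamma>. is_bang \<phi>"
      using add.prems(2) by simp
    show "\<forall>D'. D \<subseteq> D' \<longrightarrow> (\<forall>\<delta>'. Bang \<delta>' \<in># \<Gamma> \<longrightarrow> supp D' {#} \<delta>') \<longrightarrow> supp D' M \<psi>"
    proof (intro allI impI)
      fix D'
      assume "D \<subseteq> D'" and "\<forall>\<delta>'. Bang \<delta>' \<in># \<Gamma> \<longrightarrow> supp D' {#} \<delta>'"
      moreover have "supp D' {#} \<delta>"
        using supp_mono \<open>supp D {#} \<delta>\<close> \<open>D \<subseteq> D'\<close> .
      ultimately show "supp D' M \<psi>"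
        using add.prems(3) \<open>C \<subseteq> D\<close> \<phi> by (simp; blast)
    qed
  qed
  with K(2) have "supp C (K1 + (K2 + M)) \<psi>"
    by (blast intro: supp_Bang_elim)
  then show ?case
    using K(1) by (simp add: add.assoc)
qed

lemma supp_ms_Bangs_intro:
  assumes "\<forall>\<phi>\<in>#\<Gamma>. is_bang \<phi>" and "\<forall>\<delta>. Bang \<delta> \<in># \<Gamma> \<longrightarrow> supp C {#} \<delta>"
  shows "supp_ms C {#} \<Gamma>"
  using assms
proof (induction \<Gamma>)
  case empty
  then show ?case by simp
next
  case (add \<phi> \<Gamma>)
  then obtain \<delta> where \<phi>: "\<phi> = Bang \<delta>"
    by (auto simp: is_bang_def)
  have "supp C {#} (Bang \<delta>)"
    using add.prems(2) \<phi> by (intro supp_Bang_intro) simp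
  moreover have "supp_ms C {#} \<Gamma>"
    using add by simp
  ultimately show ?case
    using \<phi> by (auto simp: supp_ms_add_mset)
qed

lemma ante_supp_nonempty_iff:
  assumes "\<Gamma> \<noteq> {#}"
  shows "ante_supp B L \<Gamma> \<phi> \<longleftrightarrow>
    (\<forall>C K. B \<subseteq> C \<longrightarrow> (\<forall>\<delta>. Bang \<delta> \<in># \<Gamma> \<longrightarrow> supp C {#} \<delta>) \<longrightarrow>
       supp_ms C K (filter_mset (\<lambda>\<psi>. \<not> is_bang \<psi>) \<Gamma>) \<longrightarrow> supp C (L + K) \<phi>)"
proof -
  have "(if \<Theta> = {#} then K = {#} else supp_ms C K \<Theta>) \<longleftrightarrow> supp_ms C K \<Theta>"
    for C K and \<Theta> :: "'a form multiset"
    by simp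
  then show ?thesis
    unfolding ante_supp_def by (simp only: assms if_False)
qed

lemma supp_ms_discharge_Bangs:
  assumes "supp_ms C K \<Gamma>"
    and "\<forall>D. C \<subseteq> D \<longrightarrow> (\<forall>\<delta>. Bang \<delta> \<in># \<Gamma> \<longrightarrow> supp D {#} \<delta>) \<longrightarrow>
           (\<forall>K'. supp_ms D K' (filter_mset (\<lambda>\<psi>. \<not> is_bang \<psi>) \<Gamma>) \<longrightarrow> supp D (L + K') \<phi>)"
  shows "supp C (L + K) \<phi>"
proof -
  obtain K1 K2 where K: "K = K1 + K2" "supp_ms C K1 (filter_mset is_bang \<Gamma>)"
      "supp_ms C K2 (filter_mset (\<lambda>\<psi>. \<not> is_bang \<psi>) \<Gamma>)"
    using assms(1) supp_ms_partition by blast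
  have "supp D (L + K2) \<phi>"
    if "C \<subseteq> D" and "\<forall>\<delta>. Bang \<delta> \<in># filter_mset is_bang \<Gamma> \<longrightarrow> supp D {#} \<delta>" for D
  proof -
    have "\<forall>\<delta>. Bang \<delta> \<in># \<Gamma> \<longrightarrow> supp D {#} \<delta>"
      using that(2) by simp
    with assms(2) \<open>C \<subseteq> D\<close> supp_ms_mono[OF K(3) \<open>C \<subseteq> D\<close>] show ?thesis
      by blast
  qed
  with K(2) have "supp C (K1 + (L + K2)) \<phi>"
    by (intro supp_ms_Bangs_elim) auto
  then show ?thesis
    using K(1) by (simp add: ac_simps)
qed

lemma supp_ms_add_Bangs:
  assumes "\<forall>\<delta>. Bang \<delta> \<in># \<Gamma> \<longrightarrow> supp C {#} \<delta>"
    and "supp_ms C K (filter_mset (\<lambda>\<psi>. \<not> is_bang \<psi>) \<Gamma>)"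
  shows "supp_ms C K \<Gamma>"
proof -
  have "supp_ms C {#} (filter_mset is_bang \<Gamma>)"
    using assms(1) by (intro supp_ms_Bangs_intro) auto
  with assms(2) show ?thesis
    using supp_ms_partition[of C K \<Gamma> is_bang] by (metis add_0)
qed

theorem theorem5:
  fixes B :: "'a base" and L :: "'a multiset" and \<Gamma> :: "'a form multiset" and \<phi> :: "'a form"
  assumes "\<Gamma> \<noteq> {#}"
  shows "ante_supp B L \<Gamma> \<phi> \<longleftrightarrow>
         (\<forall>C K. B \<subseteq> C \<longrightarrow> supp_ms C K \<Gamma> \<longrightarrow> supp C (L + K) \<phi>)"
proof -
  let ?rest = "filter_mset (\<lambda>\<psi>. \<not> is_bang \<psi>) \<Gamma>"
  show ?thesis
    unfolding ante_supp_nonempty_iff[OF assms]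
  proof (intro iffI allI impI)
    fix C K
    assume ante: "\<forall>C K. B \<subseteq> C \<longrightarrow> (\<forall>\<delta>. Bang \<delta> \<in># \<Gamma> \<longrightarrow> supp C {#} \<delta>) \<longrightarrow>
                    supp_ms C K ?rest \<longrightarrow> supp C (L + K) \<phi>"
      and "B \<subseteq> C" and "supp_ms C K \<Gamma>"
    from \<open>supp_ms C K \<Gamma>\<close> show "supp C (L + K) \<phi>"
      by (rule supp_ms_discharge_Bangs) (use ante \<open>B \<subseteq> C\<close> in \<open>meson subset_trans\<close>)
  next
    fix C K
    assume "\<forall>C K. B \<subseteq> C \<longrightarrow> supp_ms C K \<Gamma> \<longrightarrow> supp C (L + K) \<phi>"
      and "B \<subseteq> C" and "\<forall>\<delta>. Bang \<delta> \<in># \<Gamma> \<longrightarrow> supp C {#} \<delta>" and "supp_ms C K ?rest"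
    then show "supp C (L + K) \<phi>"
      using supp_ms_add_Bangs by blast
  qed
qed

end
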